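(* Let $r\geq 2$ be an integer and $C>1$. Let $\epsilon'>0$ be sufficiently small compared to $C^{-3}6^{-r}$ (i.e. $0<\epsilon'<\epsilon_0$ for a suitable $\epsilon_0=\epsilon_0(r,C)>0$), and let $n_0$ be sufficiently large. Let $G$ be a complete $r$-partite graph with parts $X_1,\ldots,X_r$, each of size at least $n_0$, whose edges are colored yellow, pink and white, such that: (1) $|X_1|\geq |X_2|\geq\cdots\geq |X_r|$; (2) $\frac{1}{C}\leq \frac{|X_i|}{|X_j|}\leq C$ for all $i,j\in[r]$; (3) for all $i,j\in[r]$ with $1\leq j<i$ and every $v\in X_i$, the vertex $v$ is incident to at most $\left(\frac{1}{r-1}-\frac{\epsilon' C^3}{r-1}\right)|X_j|$ pink edges going to $X_j$; (4) the total number of yellow edges is at most $\epsilon' 6^{-r}\sum_{1\leq i<j\leq r}|X_i||X_j|$. Then $G$ contains a copy of $K_r$ all of whose edges are white.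
   Context: $[r]=\{1,\ldots,r\}$. $K_r$ denotes the complete graph on $r$ vertices. *)

theory Defs
  imports Complex_Main
begin

datatype colour = Yellow | Pink | White

text \<open>A complete r-partite graph on vertex set nat with parts X 1, ..., X r
  (finite, pairwise disjoint); every pair of vertices in different parts is an edge.\<close>
definition coloured_complete_rpartite ::
  "nat \<Rightarrow> (nat \<Rightarrow> nat set) \<Rightarrow> (nat \<Rightarrow> nat \<Rightarrow> colour) \<Rightarrow> bool" where
  "coloured_complete_rpartite r X col \<longleftrightarrow>
     (\<forall>i\<in>{1..r}. finite (X i)) \<and>
     (\<forall>i\<in>{1..r}. \<forall>j\<in>{1..r}. i \<noteq> j \<longrightarrow> X i \<inter> X j = {}) \<and>
     (\<forall>i\<in>{1..r}. \<forall>j\<in>{1..r}. \<forall>u\<in>X i. \<forall>v\<in>X j. i \<noteq> j \<longrightarrow> col u v = col v u)"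

definition is_edge :: "nat \<Rightarrow> (nat \<Rightarrow> nat set) \<Rightarrow> nat \<Rightarrow> nat \<Rightarrow> bool" where
  "is_edge r X u v \<longleftrightarrow> (\<exists>i\<in>{1..r}. \<exists>j\<in>{1..r}. i \<noteq> j \<and> u \<in> X i \<and> v \<in> X j)"

definition yellow_edges :: "nat \<Rightarrow> (nat \<Rightarrow> nat set) \<Rightarrow> (nat \<Rightarrow> nat \<Rightarrow> colour) \<Rightarrow> nat" where
  "yellow_edges r X col = card {(u, v). \<exists>i j. 1 \<le> i \<and> i < j \<and> j \<le> r \<and>
        u \<in> X i \<and> v \<in> X j \<and> col u v = Yellow}"

definition has_white_Kr :: "nat \<Rightarrow> (nat \<Rightarrow> nat set) \<Rightarrow> (nat \<Rightarrow> nat \<Rightarrow> colour) \<Rightarrow> bool" where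
  "has_white_Kr r X col \<longleftrightarrow> (\<exists>S. S \<subseteq> (\<Union>i\<in>{1..r}. X i) \<and> card S = r \<and>
      (\<forall>u\<in>S. \<forall>v\<in>S. u \<noteq> v \<longrightarrow> is_edge r X u v \<and> col u v = White))"

end

(*
  Count transversals f with f i \<in> X i. Choose f r, f (r - 1), ..., f 1 in turn, each time
  avoiding pink edges to the vertices already chosen: by condition (3) at least
  (1 - (r - t) \<beta>) |X t| choices remain for f t, where (r - 1) \<beta> = 1 - \<epsilon>' C^3. Hence a
  fraction of at least \<epsilon>' C^3 (r - 1)! / (r - 1)^(r - 1) \<ge> \<epsilon>' C^3 / 3^(r - 1) of all
  transversals is pink-free. A fixed edge between X i and X j lies in a fraction
  1 / (|X i| |X j|) \<le> 1 / |X r|^2 of the transversals, so by (2) and (4) at most a fraction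
  \<epsilon>' r^2 C^2 / 6^r of them contain a yellow edge. Since r^2 \<le> 3 * 2^r and C^2 < C^3 this
  is smaller, so some pink-free transversal has no yellow edge; it spans a white K_r.
*)
theory Submission
  imports Defs "HOL-Library.FuncSet" "HOL-Library.Disjoint_Sets"
begin

lemma power_self_le_3_power_mult_fact: "real n ^ n \<le> 3 ^ n * fact n"
proof -
  have exp_series: "(\<lambda>k. real n ^ k / fact k) sums exp (real n)"
    using exp_converges[of "real n"] by (simp add: divide_inverse mult.commute)
  have "real n ^ n / fact n \<le> exp (real n)"
    using sum_le_suminf[OF sums_summable[OF exp_series], of "{n}"] sums_unique[OF exp_series] by simp
  also have "\<dots> = exp 1 ^ n"
    by (simp flip: exp_of_nat_mult)
  also have "\<dots> \<le> 3 ^ n"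
    using exp_le by (intro power_mono) auto
  finally show ?thesis by (simp add: divide_le_eq mult.commute)
qed

lemma prod_shifted_fractions_ge:
  assumes "r \<ge> 2"
  shows "1 / 3 ^ (r - 1) \<le> (\<Prod>t\<in>{2..r}. (real t - 1) / (real r - 1))"
proof -
  obtain q where q: "r = Suc q" "q \<ge> 1" using assms by (cases r) auto
  have "(\<Prod>t\<in>{2..r}. real t - 1) = (\<Prod>i\<in>{1..q}. real (Suc i) - 1)"
    using prod.shift_bounds_cl_Suc_ivl[of "\<lambda>t. real t - 1" 1 q] q by (simp add: numeral_2_eq_2)
  also have "\<dots> = fact q"
    by (simp add: fact_prod)
  finally have "(\<Prod>t\<in>{2..r}. (real t - 1) / (real r - 1)) = fact q / real q ^ q"
    using q by (simp add: prod_dividef)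
  moreover have "fact q / (3 ^ q * fact q) \<le> fact q / real q ^ q"
    using power_self_le_3_power_mult_fact[of q] q by (intro divide_left_mono) auto
  ultimately show ?thesis using q by simp
qed

lemma prod_greedy_factors_ge:
  assumes r: "r \<ge> 2" and \<beta>: "(real r - 1) * \<beta> = 1 - \<delta>" and \<delta>: "0 \<le> \<delta>"
  shows "\<delta> / 3 ^ (r - 1) \<le> (\<Prod>t\<in>{1..r}. 1 - (real r - real t) * \<beta>)"
proof -
  have "\<beta> = (1 - \<delta>) / (real r - 1)"
    using r \<beta> by (simp add: field_simps)
  then have \<beta>_le: "\<beta> \<le> 1 / (real r - 1)"
    using r \<delta> by (simp add: divide_right_mono)
  have "(real t - 1) / (real r - 1) \<le> 1 - (real r - real t) * \<beta>" if "t \<in> {2..r}" for t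
  proof -
    have "(real r - real t) * \<beta> \<le> (real r - real t) * (1 / (real r - 1))"
      using that \<beta>_le by (intro mult_left_mono) auto
    also have "\<dots> = 1 - (real t - 1) / (real r - 1)"
      using r by (simp add: field_simps)
    finally show ?thesis by simp
  qed
  then have "(\<Prod>t\<in>{2..r}. (real t - 1) / (real r - 1)) \<le> (\<Prod>t\<in>{2..r}. 1 - (real r - real t) * \<beta>)"
    by (intro prod_mono) auto
  with prod_shifted_fractions_ge[OF r]
  have "1 / 3 ^ (r - 1) \<le> (\<Prod>t\<in>{2..r}. 1 - (real r - real t) * \<beta>)"
    by linarith
  then have "\<delta> * (1 / 3 ^ (r - 1)) \<le> \<delta> * (\<Prod>t\<in>{2..r}. 1 - (real r - real t) * \<beta>)"
    using \<delta> by (rule mult_left_mono)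
  moreover have "{1..r} = insert 1 {2..r}" using r by auto
  ultimately show ?thesis using \<beta> by simp
qed

lemma square_le_3_mult_2_power: "(r::nat)\<^sup>2 \<le> 3 * 2 ^ r"
proof (induction r rule: less_induct)
  case (less r)
  show ?case
  proof (cases "r \<le> 3")
    case True
    then have "r \<in> {0, 1, 2, 3}" by auto
    then show ?thesis by (auto simp: power2_eq_square)
  next
    case False
    then obtain n where r: "r = Suc n" and n: "n \<ge> 3" by (cases r) auto
    have "3 * n \<le> n * n"
      using mult_le_mono1[OF n] by simp
    moreover have "(Suc n)\<^sup>2 = n * n + 2 * n + 1" "n\<^sup>2 = n * n"
      by (simp_all add: power2_eq_square)
    ultimately have "(Suc n)\<^sup>2 \<le> 2 * n\<^sup>2"
      using n by linarith
    moreover have "n\<^sup>2 \<le> 3 * 2 ^ n"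
      using r by (intro less.IH) simp
    ultimately show ?thesis
      unfolding r power_Suc[of 2] by linarith
  qed
qed

lemma square_div_6_power_le:
  assumes "r \<ge> 1"
  shows "real r ^ 2 / 6 ^ r \<le> 1 / 3 ^ (r - 1)"
proof -
  have "real r ^ 2 \<le> 3 * 2 ^ r"
    using of_nat_mono[OF square_le_3_mult_2_power[of r], where 'a=real] by simp
  then have "real r ^ 2 * 3 ^ (r - 1) \<le> 3 * 2 ^ r * 3 ^ (r - 1)"
    by (rule mult_right_mono) simp
  also have "\<dots> = 2 ^ r * (3 ^ (r - 1) * 3)"
    by (simp add: ac_simps)
  also have "\<dots> = 2 ^ r * 3 ^ r"
    using assms power_minus_mult[of r "3::real"] by simp
  also have "\<dots> = 6 ^ r"
    using power_mult_distrib[of "2::real" 3 r] by simp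
  finally show ?thesis
    by (simp add: field_simps)
qed

lemma sum_pair_products_le:
  fixes a :: "nat \<Rightarrow> real"
  assumes "\<forall>i\<in>{1..r}. 0 \<le> a i \<and> a i \<le> M"
  shows "(\<Sum>i\<in>{1..r}. \<Sum>j\<in>{i<..r}. a i * a j) \<le> real r ^ 2 * M ^ 2"
proof -
  have "(\<Sum>j\<in>{i<..r}. a i * a j) \<le> real r * M ^ 2" if "i \<in> {1..r}" for i
  proof -
    have "(\<Sum>j\<in>{i<..r}. a i * a j) \<le> real (card {i<..r}) * M ^ 2"
    proof (rule sum_bounded_above)
      fix j assume "j \<in> {i<..r}"
      then have "0 \<le> a i" "a i \<le> M" "0 \<le> a j" "a j \<le> M"
        using assms that by auto
      then show "a i * a j \<le> M ^ 2"
        unfolding power2_eq_square by (intro mult_mono) auto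
    qed
    also have "\<dots> \<le> real r * M ^ 2"
      by (intro mult_right_mono) auto
    finally show ?thesis .
  qed
  then have "(\<Sum>i\<in>{1..r}. \<Sum>j\<in>{i<..r}. a i * a j) \<le> real (card {1..r}) * (real r * M ^ 2)"
    by (intro sum_bounded_above) auto
  then show ?thesis by (simp add: power2_eq_square)
qed

section \<open>Greedy counting of compatible transversals\<close>

definition compatible_transversals ::
  "(nat \<Rightarrow> 'a set) \<Rightarrow> ('a \<Rightarrow> 'a \<Rightarrow> bool) \<Rightarrow> nat set \<Rightarrow> (nat \<Rightarrow> 'a) set" where
  "compatible_transversals X R J = {f \<in> Pi\<^sub>E J X. \<forall>i\<in>J. \<forall>j\<in>J. j < i \<longrightarrow> R (f i) (f j)}"

lemma finite_compatible_transversals: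
  "finite J \<Longrightarrow> \<forall>i\<in>J. finite (X i) \<Longrightarrow> finite (compatible_transversals X R J)"
  unfolding compatible_transversals_def by (auto intro: finite_subset[OF _ finite_PiE])

lemma compatible_transversals_insert:
  assumes "\<forall>i\<in>I. k < i"
  shows "compatible_transversals X R (insert k I) =
    (\<lambda>(g, v). g(k := v)) ` (SIGMA g:compatible_transversals X R I. {v \<in> X k. \<forall>i\<in>I. R (g i) v})"
    (is "?T = (\<lambda>(g, v). g(k := v)) ` ?S")
proof -
  have k: "k \<notin> I" using assms by blast
  show ?thesis
  proof (intro subset_antisym subsetI)
    fix f
    assume "f \<in> ?T"
    then have "(f(k := undefined), f k) \<in> ?S"
      using k assms unfolding compatible_transversals_def by (auto intro: fun_upd_in_PiE)
    then show "f \<in> (\<lambda>(g, v). g(k := v)) ` ?S"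
      by (rule rev_image_eqI) simp
  next
    fix f
    assume "f \<in> (\<lambda>(g, v). g(k := v)) ` ?S"
    then obtain g v where f: "f = g(k := v)" and g: "g \<in> compatible_transversals X R I"
      and v: "v \<in> X k" "\<forall>i\<in>I. R (g i) v" by auto
    have "g(k := v) \<in> Pi\<^sub>E (insert k I) X"
      using g v by (simp add: compatible_transversals_def PiE_fun_upd)
    with g v k assms show "f \<in> ?T" unfolding f compatible_transversals_def by auto
  qed
qed

lemma card_compatible_transversals_insert:
  assumes "finite I" "\<forall>i\<in>insert k I. finite (X i)" "\<forall>i\<in>I. k < i"
  shows "card (compatible_transversals X R (insert k I)) =
    (\<Sum>g\<in>compatible_transversals X R I. card {v \<in> X k. \<forall>i\<in>I. R (g i) v})"
proof -
  have "inj_on ((\<lambda>(v, g). g(k := v)) \<circ> prod.swap) (Pi\<^sub>E I X \<times> X k)"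
    using assms(3) by (intro comp_inj_on) (auto simp: product_swap intro: inj_combinator)
  then have "inj_on (\<lambda>(g, v). g(k := v)) (Pi\<^sub>E I X \<times> X k)"
    by (simp add: comp_def split_def)
  then have "inj_on (\<lambda>(g, v). g(k := v))
      (SIGMA g:compatible_transversals X R I. {v \<in> X k. \<forall>i\<in>I. R (g i) v})"
    by (rule inj_on_subset) (auto simp: compatible_transversals_def)
  moreover have "finite (compatible_transversals X R I)"
    using assms(1,2) by (simp add: finite_compatible_transversals)
  ultimately show ?thesis
    using assms(2) by (simp add: compatible_transversals_insert[OF assms(3)] card_image)
qed

lemma card_compatible_transversals_ge:
  assumes fin: "\<forall>t\<in>{1..r}. finite (X t)" and nonneg: "\<forall>t\<in>{1..r}. 0 \<le> c t"
    and extend: "\<forall>t\<in>{1..r}. \<forall>g\<in>compatible_transversals X R {t<..r}.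
      c t * real (card (X t)) \<le> real (card {v \<in> X t. \<forall>i\<in>{t<..r}. R (g i) v})"
  shows "(\<Prod>t\<in>{1..r}. c t * real (card (X t))) \<le> real (card (compatible_transversals X R {1..r}))"
proof -
  have "1 \<le> n \<longrightarrow> (\<Prod>t\<in>{n..r}. c t * real (card (X t)))
      \<le> real (card (compatible_transversals X R {n..r}))" if "n \<le> Suc r" for n
    using that
  proof (induction n rule: inc_induct)
    case base
    then show ?case by (simp add: compatible_transversals_def)
  next
    case (step n)
    show ?case
    proof
      assume "1 \<le> n"
      with step.hyps have n: "n \<in> {1..r}" by simp
      have I: "{n..r} = insert n {n<..r}" "{Suc n..r} = {n<..r}" using n by auto
      let ?T = "compatible_transversals X R {n<..r}"
      have "(\<Prod>t\<in>{n..r}. c t * real (card (X t)))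
          = (\<Prod>t\<in>{n<..r}. c t * real (card (X t))) * (c n * real (card (X n)))"
        unfolding I by simp
      also have "\<dots> \<le> real (card ?T) * (c n * real (card (X n)))"
        using step.IH nonneg n unfolding I by (intro mult_right_mono) auto
      also have "\<dots> = (\<Sum>g\<in>?T. c n * real (card (X n)))"
        by simp
      also have "\<dots> \<le> (\<Sum>g\<in>?T. real (card {v \<in> X n. \<forall>i\<in>{n<..r}. R (g i) v}))"
        using extend n by (intro sum_mono) auto
      also have "\<dots> = real (card (compatible_transversals X R {n..r}))"
        using fin n unfolding I by (subst card_compatible_transversals_insert) auto
      finally show "(\<Prod>t\<in>{n..r}. c t * real (card (X t)))
          \<le> real (card (compatible_transversals X R {n..r}))" .
    qed
  qed
  then show ?thesis by simp
qed

lemma card_satisfying_all_ge: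
  assumes "finite A" "finite I"
    and bad: "\<forall>i\<in>I. real (card {w \<in> A. \<not> P i w}) \<le> \<beta> * real (card A)"
  shows "(1 - real (card I) * \<beta>) * real (card A) \<le> real (card {w \<in> A. \<forall>i\<in>I. P i w})"
proof -
  let ?Good = "{w \<in> A. \<forall>i\<in>I. P i w}" and ?Bad = "\<lambda>i. {w \<in> A. \<not> P i w}"
  have "card A \<le> card (?Good \<union> (\<Union>i\<in>I. ?Bad i))"
    using assms(1,2) by (intro card_mono) auto
  also have "\<dots> \<le> card ?Good + card (\<Union>i\<in>I. ?Bad i)"
    by (rule card_Un_le)
  also have "\<dots> \<le> card ?Good + (\<Sum>i\<in>I. card (?Bad i))"
    using assms(2) by (simp add: card_UN_le)
  finally have "real (card A) \<le> real (card ?Good + (\<Sum>i\<in>I. card (?Bad i)))"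
    by (rule of_nat_mono)
  then have "real (card A) \<le> real (card ?Good) + (\<Sum>i\<in>I. real (card (?Bad i)))"
    by simp
  also have "(\<Sum>i\<in>I. real (card (?Bad i))) \<le> real (card I) * (\<beta> * real (card A))"
    using bad by (intro sum_bounded_above) auto
  finally show ?thesis
    by (simp add: algebra_simps)
qed

lemma card_compatible_transversals_greedy_ge:
  assumes fin: "\<forall>t\<in>{1..r}. finite (X t)"
    and few_conflicts: "\<forall>t\<in>{1..r}. \<forall>i\<in>{t<..r}. \<forall>v\<in>X i.
      real (card {w \<in> X t. \<not> R v w}) \<le> \<beta> * real (card (X t))"
    and \<beta>: "(real r - 1) * \<beta> \<le> 1"
  shows "(\<Prod>t\<in>{1..r}. (1 - (real r - real t) * \<beta>) * real (card (X t)))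
    \<le> real (card (compatible_transversals X R {1..r}))"
proof (rule card_compatible_transversals_ge[OF fin])
  show "\<forall>t\<in>{1..r}. 0 \<le> 1 - (real r - real t) * \<beta>"
  proof
    fix t assume t: "t \<in> {1..r}"
    show "0 \<le> 1 - (real r - real t) * \<beta>"
    proof (cases "\<beta> \<ge> 0")
      case True
      then have "(real r - real t) * \<beta> \<le> (real r - 1) * \<beta>"
        using t by (intro mult_right_mono) auto
      then show ?thesis using \<beta> by linarith
    next
      case False
      then have "(real r - real t) * \<beta> \<le> 0"
        using t by (intro mult_nonneg_nonpos) auto
      then show ?thesis by linarith
    qed
  qed
  show "\<forall>t\<in>{1..r}. \<forall>g\<in>compatible_transversals X R {t<..r}.
    (1 - (real r - real t) * \<beta>) * real (card (X t)) \<le> real (card {v \<in> X t. \<forall>i\<in>{t<..r}. R (g i) v})"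
  proof (intro ballI)
    fix t g assume t: "t \<in> {1..r}" and g: "g \<in> compatible_transversals X R {t<..r}"
    have "g i \<in> X i" if "i \<in> {t<..r}" for i
      using g that unfolding compatible_transversals_def by auto
    then have "\<forall>i\<in>{t<..r}. real (card {w \<in> X t. \<not> R (g i) w}) \<le> \<beta> * real (card (X t))"
      using few_conflicts t by blast
    then have "(1 - real (card {t<..r}) * \<beta>) * real (card (X t))
        \<le> real (card {v \<in> X t. \<forall>i\<in>{t<..r}. R (g i) v})"
      using fin t by (intro card_satisfying_all_ge) auto
    then show "(1 - (real r - real t) * \<beta>) * real (card (X t))
        \<le> real (card {v \<in> X t. \<forall>i\<in>{t<..r}. R (g i) v})"
      using t by simp
  qed
qed

section \<open>Transversals through prescribed pairs\<close>

lemma prod_remove_two: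
  assumes "finite I" "i \<in> I" "j \<in> I" "i \<noteq> j"
  shows "prod g I = g i * g j * prod g (I - {i, j})"
proof -
  have "prod g I = g i * prod g (I - {i})"
    using assms by (simp add: prod.remove)
  also have "prod g (I - {i}) = g j * prod g (I - {i} - {j})"
    using assms by (intro prod.remove) auto
  finally show ?thesis by (simp add: insert_commute set_diff_eq mult.assoc)
qed

lemma card_PiE_fix_two:
  assumes "finite I" "i \<in> I" "j \<in> I" "i \<noteq> j" "u \<in> X i" "v \<in> X j"
  shows "card {f \<in> Pi\<^sub>E I X. f i = u \<and> f j = v} * (card (X i) * card (X j))
    = (\<Prod>k\<in>I. card (X k))"
proof -
  let ?Y = "X(i := {u}, j := {v})"
  have "{f \<in> Pi\<^sub>E I X. f i = u \<and> f j = v} = Pi\<^sub>E I ?Y"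
    using assms unfolding PiE_def Pi_def extensional_def by (auto split: if_splits)
  then have "card {f \<in> Pi\<^sub>E I X. f i = u \<and> f j = v} = (\<Prod>k\<in>I - {i, j}. card (?Y k))"
    using assms by (simp add: card_PiE prod_remove_two[of I i j])
  also have "\<dots> = (\<Prod>k\<in>I - {i, j}. card (X k))"
    by (rule prod.cong) auto
  finally show ?thesis
    using assms by (simp add: prod_remove_two[of I i j])
qed

lemma transversals_through_pair_eq:
  assumes disj: "disjoint_family_on X I"
    and ij: "i \<in> I" "j \<in> I" "i \<noteq> j" and uv: "u \<in> X i" "v \<in> X j"
  shows "{f \<in> Pi\<^sub>E I X. \<exists>i'\<in>I. \<exists>j'\<in>I. i' \<noteq> j' \<and> (f i', f j') = (u, v)}
    = {f \<in> Pi\<^sub>E I X. f i = u \<and> f j = v}"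
proof (intro set_eqI iffI)
  fix f assume "f \<in> {f \<in> Pi\<^sub>E I X. \<exists>i'\<in>I. \<exists>j'\<in>I. i' \<noteq> j' \<and> (f i', f j') = (u, v)}"
  then obtain i' j' where f: "f \<in> Pi\<^sub>E I X" "i' \<in> I" "j' \<in> I" "f i' = u" "f j' = v"
    by auto
  then have "u \<in> X i'" "v \<in> X j'" by auto
  with ij uv f(2,3) have "i' = i" "j' = j"
    using disjoint_family_onD[OF disj] by blast+
  with f show "f \<in> {f \<in> Pi\<^sub>E I X. f i = u \<and> f j = v}" by simp
next
  fix f assume "f \<in> {f \<in> Pi\<^sub>E I X. f i = u \<and> f j = v}"
  with ij show "f \<in> {f \<in> Pi\<^sub>E I X. \<exists>i'\<in>I. \<exists>j'\<in>I. i' \<noteq> j' \<and> (f i', f j') = (u, v)}"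
    by blast
qed

lemma card_transversals_through_pairs_le:
  assumes fin: "finite I" "\<forall>k\<in>I. finite (X k)" and disj: "disjoint_family_on X I"
    and m: "\<forall>k\<in>I. m \<le> card (X k)"
    and E: "E \<subseteq> {(u, v). \<exists>i\<in>I. \<exists>j\<in>I. i \<noteq> j \<and> u \<in> X i \<and> v \<in> X j}"
  shows "card {f \<in> Pi\<^sub>E I X. \<exists>i\<in>I. \<exists>j\<in>I. i \<noteq> j \<and> (f i, f j) \<in> E} * m\<^sup>2
    \<le> card E * (\<Prod>k\<in>I. card (X k))"
proof -
  define Through where "Through p = {f \<in> Pi\<^sub>E I X. \<exists>i\<in>I. \<exists>j\<in>I. i \<noteq> j \<and> (f i, f j) = p}" for p
  have "E \<subseteq> (\<Union>k\<in>I. X k) \<times> (\<Union>k\<in>I. X k)"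
    using E by blast
  then have finE: "finite E"
    by (rule finite_subset) (use fin in auto)
  have through: "card (Through p) * m\<^sup>2 \<le> (\<Prod>k\<in>I. card (X k))" if pE: "p \<in> E" for p
  proof -
    obtain u v i j where p: "p = (u, v)" "i \<in> I" "j \<in> I" "i \<noteq> j" "u \<in> X i" "v \<in> X j"
      using E pE by auto
    have "Through p = {f \<in> Pi\<^sub>E I X. f i = u \<and> f j = v}"
      unfolding Through_def p(1) using disj p(2-6) by (rule transversals_through_pair_eq)
    then have "card (Through p) * (card (X i) * card (X j)) = (\<Prod>k\<in>I. card (X k))"
      using card_PiE_fix_two[OF fin(1) p(2-6)] by simp
    moreover have "m\<^sup>2 \<le> card (X i) * card (X j)"
      using m p by (simp add: power2_eq_square mult_le_mono)
    ultimately show ?thesis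
      by (metis mult_le_mono2)
  qed
  have "{f \<in> Pi\<^sub>E I X. \<exists>i\<in>I. \<exists>j\<in>I. i \<noteq> j \<and> (f i, f j) \<in> E} = (\<Union>p\<in>E. Through p)"
    unfolding Through_def by auto
  then have "card {f \<in> Pi\<^sub>E I X. \<exists>i\<in>I. \<exists>j\<in>I. i \<noteq> j \<and> (f i, f j) \<in> E} * m\<^sup>2
      \<le> (\<Sum>p\<in>E. card (Through p)) * m\<^sup>2"
    using card_UN_le[OF finE, of Through] by simp
  also have "\<dots> \<le> (\<Sum>p\<in>E. \<Prod>k\<in>I. card (X k))"
    unfolding sum_distrib_right using through by (rule sum_mono)
  finally show ?thesis by simp
qed

section \<open>Coloured complete r-partite graphs with balanced parts\<close>

locale balanced_coloured_rpartite =
  fixes r :: nat and C :: real and X :: "nat \<Rightarrow> nat set" and col :: "nat \<Rightarrow> nat \<Rightarrow> colour"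
  assumes r: "r \<ge> 2" and C: "C > 1"
    and coloured: "coloured_complete_rpartite r X col"
    and decreasing: "\<forall>i\<in>{1..r}. \<forall>j\<in>{1..r}. i \<le> j \<longrightarrow> card (X i) \<ge> card (X j)"
    and ratio: "\<forall>i\<in>{1..r}. \<forall>j\<in>{1..r}. 1 / C \<le> real (card (X i)) / real (card (X j)) \<and>
      real (card (X i)) / real (card (X j)) \<le> C"
begin

lemma finite_parts: "\<forall>i\<in>{1..r}. finite (X i)"
  using coloured unfolding coloured_complete_rpartite_def by blast

lemma disjoint_parts: "disjoint_family_on X {1..r}"
  using coloured unfolding coloured_complete_rpartite_def disjoint_family_on_def by blast

lemma col_commute:
  "i \<in> {1..r} \<Longrightarrow> j \<in> {1..r} \<Longrightarrow> i \<noteq> j \<Longrightarrow> u \<in> X i \<Longrightarrow> v \<in> X j \<Longrightarrow> col u v = col v u"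
  using coloured unfolding coloured_complete_rpartite_def by blast

lemma card_part_pos: "i \<in> {1..r} \<Longrightarrow> 0 < card (X i)"
proof (rule ccontr)
  assume i: "i \<in> {1..r}" and "\<not> 0 < card (X i)"
  then have "1 / C \<le> 0"
    using ratio[rule_format, OF i, of 1] r by simp
  with C show False by simp
qed

lemma card_last_part_le: "i \<in> {1..r} \<Longrightarrow> card (X r) \<le> card (X i)"
  using decreasing r by auto

lemma card_part_le: "i \<in> {1..r} \<Longrightarrow> real (card (X i)) \<le> C * real (card (X r))"
  using ratio[rule_format, of i r] r card_part_pos[of r] by (simp add: divide_le_eq)

definition yellow_pairs :: "(nat \<times> nat) set" where
  "yellow_pairs = {(u, v). \<exists>i j. 1 \<le> i \<and> i < j \<and> j \<le> r \<and> u \<in> X i \<and> v \<in> X j \<and> col u v = Yellow}"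

definition yellow_transversals :: "(nat \<Rightarrow> nat) set" where
  "yellow_transversals =
    {f \<in> Pi\<^sub>E {1..r} X. \<exists>i\<in>{1..r}. \<exists>j\<in>{1..r}. i \<noteq> j \<and> (f i, f j) \<in> yellow_pairs}"

lemma card_yellow_pairs: "card yellow_pairs = yellow_edges r X col"
  unfolding yellow_pairs_def yellow_edges_def ..

lemma yellow_pairs_subset:
  "yellow_pairs \<subseteq> {(u, v). \<exists>i\<in>{1..r}. \<exists>j\<in>{1..r}. i \<noteq> j \<and> u \<in> X i \<and> v \<in> X j}"
  unfolding yellow_pairs_def
proof clarify
  fix u v i j assume "1 \<le> i" "i < j" "j \<le> r" "u \<in> X i" "v \<in> X j"
  then show "\<exists>i\<in>{1..r}. \<exists>j\<in>{1..r}. i \<noteq> j \<and> u \<in> X i \<and> v \<in> X j"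
    by (intro bexI[of _ i] bexI[of _ j]) auto
qed

lemma yellow_edges_le:
  assumes \<epsilon>: "0 \<le> \<epsilon>"
    and yellow: "real (yellow_edges r X col)
      \<le> \<epsilon> * 6 powr (- real r) * (\<Sum>i\<in>{1..r}. \<Sum>j\<in>{i<..r}. real (card (X i)) * real (card (X j)))"
  shows "real (yellow_edges r X col) \<le> \<epsilon> / 6 ^ r * (real r ^ 2 * (C * real (card (X r))) ^ 2)"
proof -
  have "(\<Sum>i\<in>{1..r}. \<Sum>j\<in>{i<..r}. real (card (X i)) * real (card (X j)))
      \<le> real r ^ 2 * (C * real (card (X r))) ^ 2"
    using card_part_le by (intro sum_pair_products_le) auto
  then have "\<epsilon> / 6 ^ r * (\<Sum>i\<in>{1..r}. \<Sum>j\<in>{i<..r}. real (card (X i)) * real (card (X j)))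
      \<le> \<epsilon> / 6 ^ r * (real r ^ 2 * (C * real (card (X r))) ^ 2)"
    using \<epsilon> by (intro mult_left_mono) auto
  moreover have "(6::real) powr (- real r) = 1 / 6 ^ r"
    by (simp add: powr_minus powr_realpow divide_inverse)
  ultimately show ?thesis
    using yellow by simp
qed

lemma card_yellow_transversals_le:
  assumes "0 \<le> \<epsilon>"
    and "real (yellow_edges r X col)
      \<le> \<epsilon> * 6 powr (- real r) * (\<Sum>i\<in>{1..r}. \<Sum>j\<in>{i<..r}. real (card (X i)) * real (card (X j)))"
  shows "real (card yellow_transversals)
    \<le> \<epsilon> * real r ^ 2 * C ^ 2 / 6 ^ r * (\<Prod>t\<in>{1..r}. real (card (X t)))"
proof -
  define m where "m = card (X r)"
  have "card yellow_transversals * m\<^sup>2 \<le> card yellow_pairs * (\<Prod>t\<in>{1..r}. card (X t))"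
    unfolding yellow_transversals_def m_def using finite_parts disjoint_parts card_last_part_le
    by (intro card_transversals_through_pairs_le yellow_pairs_subset) auto
  then have "real (card yellow_transversals) * real m ^ 2
      \<le> real (yellow_edges r X col) * (\<Prod>t\<in>{1..r}. real (card (X t)))"
    unfolding card_yellow_pairs[symmetric] by (metis of_nat_mono of_nat_mult of_nat_power of_nat_prod)
  also have "\<dots> \<le> \<epsilon> / 6 ^ r * (real r ^ 2 * (C * real m) ^ 2) * (\<Prod>t\<in>{1..r}. real (card (X t)))"
    using yellow_edges_le[OF assms] unfolding m_def by (intro mult_right_mono) (auto simp: prod_nonneg)
  also have "\<dots> = \<epsilon> * real r ^ 2 * C ^ 2 / 6 ^ r * (\<Prod>t\<in>{1..r}. real (card (X t))) * real m ^ 2"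
    by (simp add: power_mult_distrib)
  finally have "real (card yellow_transversals) * real m ^ 2
    \<le> \<epsilon> * real r ^ 2 * C ^ 2 / 6 ^ r * (\<Prod>t\<in>{1..r}. real (card (X t))) * real m ^ 2" .
  moreover have "0 < real m ^ 2"
    using card_part_pos[of r] r unfolding m_def by simp
  ultimately show ?thesis
    by (rule mult_right_le_imp_le)
qed

lemma card_pink_free_transversals_ge:
  assumes \<delta>: "0 \<le> \<delta>"
    and pink: "\<forall>i\<in>{1..r}. \<forall>j\<in>{1..r}. j < i \<longrightarrow> (\<forall>v\<in>X i.
      real (card {w \<in> X j. col v w = Pink}) \<le> (1 / (real r - 1) - \<delta> / (real r - 1)) * real (card (X j)))"
  shows "\<delta> / 3 ^ (r - 1) * (\<Prod>t\<in>{1..r}. real (card (X t)))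
    \<le> real (card (compatible_transversals X (\<lambda>u v. col u v \<noteq> Pink) {1..r}))"
proof -
  define \<beta> where "\<beta> = 1 / (real r - 1) - \<delta> / (real r - 1)"
  have \<beta>: "(real r - 1) * \<beta> = 1 - \<delta>"
    using r unfolding \<beta>_def by (simp add: field_simps)
  have "\<delta> / 3 ^ (r - 1) * (\<Prod>t\<in>{1..r}. real (card (X t)))
      \<le> (\<Prod>t\<in>{1..r}. 1 - (real r - real t) * \<beta>) * (\<Prod>t\<in>{1..r}. real (card (X t)))"
    using prod_greedy_factors_ge[OF r \<beta> \<delta>] by (intro mult_right_mono) (auto simp: prod_nonneg)
  also have "\<dots> = (\<Prod>t\<in>{1..r}. (1 - (real r - real t) * \<beta>) * real (card (X t)))"
    by (simp add: prod.distrib)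
  also have "\<dots> \<le> real (card (compatible_transversals X (\<lambda>u v. col u v \<noteq> Pink) {1..r}))"
  proof (rule card_compatible_transversals_greedy_ge[OF finite_parts])
    show "\<forall>t\<in>{1..r}. \<forall>i\<in>{t<..r}. \<forall>v\<in>X i.
      real (card {w \<in> X t. \<not> col v w \<noteq> Pink}) \<le> \<beta> * real (card (X t))"
    proof (intro ballI)
      fix t i v assume "t \<in> {1..r}" "i \<in> {t<..r}" "v \<in> X i"
      then show "real (card {w \<in> X t. \<not> col v w \<noteq> Pink}) \<le> \<beta> * real (card (X t))"
        using pink[rule_format, of i t v] unfolding \<beta>_def by simp
    qed
    show "(real r - 1) * \<beta> \<le> 1"
      using \<beta> \<delta> by simp
  qed
  finally show ?thesis .
qed

lemma has_white_Kr_if_white_transversal: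
  assumes f: "f \<in> Pi\<^sub>E {1..r} X"
    and white: "\<forall>i\<in>{1..r}. \<forall>j\<in>{1..r}. i \<noteq> j \<longrightarrow> col (f i) (f j) = White"
  shows "has_white_Kr r X col"
proof -
  have "inj_on f {1..r}"
  proof (rule inj_onI, rule ccontr)
    fix i j assume "i \<in> {1..r}" "j \<in> {1..r}" "f i = f j" "i \<noteq> j"
    with f show False
      using disjoint_family_onD[OF disjoint_parts] by (metis PiE_mem disjoint_iff)
  qed
  then have "card (f ` {1..r}) = r"
    by (simp add: card_image)
  moreover have "f ` {1..r} \<subseteq> (\<Union>i\<in>{1..r}. X i)"
    using f by auto
  moreover have "is_edge r X (f i) (f j) \<and> col (f i) (f j) = White"
    if ij: "i \<in> {1..r}" "j \<in> {1..r}" "f i \<noteq> f j" for i j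
  proof
    have "i \<noteq> j" using ij(3) by blast
    with ij f show "is_edge r X (f i) (f j)"
      unfolding is_edge_def by (intro bexI[of _ i] bexI[of _ j]) auto
    from \<open>i \<noteq> j\<close> ij white show "col (f i) (f j) = White" by blast
  qed
  ultimately show ?thesis
    unfolding has_white_Kr_def by blast
qed

lemma col_white_if_pink_free_not_yellow:
  assumes pink_free: "f \<in> compatible_transversals X (\<lambda>u v. col u v \<noteq> Pink) {1..r}"
    and not_yellow: "f \<notin> yellow_transversals"
    and ij: "i \<in> {1..r}" "j \<in> {1..r}" "i \<noteq> j"
  shows "col (f i) (f j) = White"
proof -
  have f: "f \<in> Pi\<^sub>E {1..r} X"
    using pink_free unfolding compatible_transversals_def by blast
  have "col (f a) (f b) \<noteq> Pink \<and> col (f b) (f a) \<noteq> Yellow"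
    if ab: "a \<in> {1..r}" "b \<in> {1..r}" "b < a" for a b
  proof
    show "col (f a) (f b) \<noteq> Pink"
      using pink_free ab unfolding compatible_transversals_def by blast
    show "col (f b) (f a) \<noteq> Yellow"
    proof
      assume "col (f b) (f a) = Yellow"
      moreover have "f a \<in> X a" "f b \<in> X b"
        using f ab by auto
      ultimately have "(f b, f a) \<in> yellow_pairs"
        using ab unfolding yellow_pairs_def by auto
      with f ab have "f \<in> yellow_transversals"
        unfolding yellow_transversals_def by (intro CollectI conjI bexI[of _ b] bexI[of _ a]) auto
      with not_yellow show False ..
    qed
  qed
  moreover have "col (f i) (f j) = col (f j) (f i)"
    using f ij by (intro col_commute) auto
  ultimately have "col (f i) (f j) \<noteq> Pink \<and> col (f i) (f j) \<noteq> Yellow"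
    using ij by (cases "j < i") (auto simp: not_less_iff_gr_or_eq)
  then show ?thesis
    by (cases "col (f i) (f j)") auto
qed

lemma card_yellow_transversals_lt_pink_free:
  assumes \<epsilon>: "0 < \<epsilon>"
    and pink: "\<forall>i\<in>{1..r}. \<forall>j\<in>{1..r}. j < i \<longrightarrow> (\<forall>v\<in>X i.
      real (card {w \<in> X j. col v w = Pink}) \<le> (1 / (real r - 1) - \<epsilon> * C ^ 3 / (real r - 1)) * real (card (X j)))"
    and yellow: "real (yellow_edges r X col)
      \<le> \<epsilon> * 6 powr (- real r) * (\<Sum>i\<in>{1..r}. \<Sum>j\<in>{i<..r}. real (card (X i)) * real (card (X j)))"
  shows "card yellow_transversals < card (compatible_transversals X (\<lambda>u v. col u v \<noteq> Pink) {1..r})"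
proof -
  define P where "P = (\<Prod>t\<in>{1..r}. real (card (X t)))"
  have "0 < P"
    unfolding P_def using card_part_pos by (intro prod_pos) auto
  with \<epsilon> have "0 < \<epsilon> * P"
    by simp
  have "0 \<le> \<epsilon> * C ^ 3"
    using \<epsilon> C by simp
  have "real r ^ 2 / 6 ^ r * C ^ 2 \<le> 1 / 3 ^ (r - 1) * C ^ 2"
    using square_div_6_power_le r by (intro mult_right_mono) auto
  also have "\<dots> < 1 / 3 ^ (r - 1) * C ^ 3"
    using C by (intro mult_strict_left_mono power_strict_increasing) auto
  finally have fractions_lt: "real r ^ 2 / 6 ^ r * C ^ 2 < 1 / 3 ^ (r - 1) * C ^ 3" .
  have "real (card yellow_transversals) \<le> \<epsilon> * real r ^ 2 * C ^ 2 / 6 ^ r * P"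
    using card_yellow_transversals_le[OF _ yellow] \<epsilon> unfolding P_def by simp
  also have "\<dots> = (real r ^ 2 / 6 ^ r * C ^ 2) * (\<epsilon> * P)"
    by simp
  also have "\<dots> < (1 / 3 ^ (r - 1) * C ^ 3) * (\<epsilon> * P)"
    using fractions_lt \<open>0 < \<epsilon> * P\<close> by (rule mult_strict_right_mono)
  also have "\<dots> = \<epsilon> * C ^ 3 / 3 ^ (r - 1) * P"
    by simp
  also have "\<dots> \<le> real (card (compatible_transversals X (\<lambda>u v. col u v \<noteq> Pink) {1..r}))"
    using card_pink_free_transversals_ge[OF \<open>0 \<le> \<epsilon> * C ^ 3\<close> pink] unfolding P_def .
  finally show ?thesis
    by simp
qed

theorem has_white_Kr_if_few_pink_and_yellow:
  assumes \<epsilon>: "0 < \<epsilon>"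
    and pink: "\<forall>i\<in>{1..r}. \<forall>j\<in>{1..r}. j < i \<longrightarrow> (\<forall>v\<in>X i.
      real (card {w \<in> X j. col v w = Pink}) \<le> (1 / (real r - 1) - \<epsilon> * C ^ 3 / (real r - 1)) * real (card (X j)))"
    and yellow: "real (yellow_edges r X col)
      \<le> \<epsilon> * 6 powr (- real r) * (\<Sum>i\<in>{1..r}. \<Sum>j\<in>{i<..r}. real (card (X i)) * real (card (X j)))"
  shows "has_white_Kr r X col"
proof -
  let ?pink_free = "compatible_transversals X (\<lambda>u v. col u v \<noteq> Pink) {1..r}"
  have "finite yellow_transversals"
    unfolding yellow_transversals_def
    by (rule finite_subset[OF _ finite_PiE[of "{1..r}" X]]) (use finite_parts in auto)
  with card_yellow_transversals_lt_pink_free[OF \<epsilon> pink yellow]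
  obtain f where f: "f \<in> ?pink_free" "f \<notin> yellow_transversals"
    using card_mono[of yellow_transversals ?pink_free] by (meson not_le subsetI)
  show ?thesis
  proof (rule has_white_Kr_if_white_transversal)
    show "f \<in> Pi\<^sub>E {1..r} X"
      using f(1) unfolding compatible_transversals_def by blast
    show "\<forall>i\<in>{1..r}. \<forall>j\<in>{1..r}. i \<noteq> j \<longrightarrow> col (f i) (f j) = White"
      using col_white_if_pink_free_not_yellow[OF f] by blast
  qed
qed

end

theorem lemma3:
  fixes r :: nat and C :: real
  assumes "r \<ge> 2" and "C > 1"
  shows "\<exists>\<epsilon>0 > 0. \<forall>\<epsilon>' :: real. 0 < \<epsilon>' \<and> \<epsilon>' < \<epsilon>0 \<longrightarrow>
    (\<exists>n0 :: nat. \<forall>X :: nat \<Rightarrow> nat set. \<forall>col :: nat \<Rightarrow> nat \<Rightarrow> colour.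
      coloured_complete_rpartite r X col \<and>
      (\<forall>i\<in>{1..r}. card (X i) \<ge> n0) \<and>
      (\<forall>i\<in>{1..r}. \<forall>j\<in>{1..r}. i \<le> j \<longrightarrow> card (X i) \<ge> card (X j)) \<and>
      (\<forall>i\<in>{1..r}. \<forall>j\<in>{1..r}. 1 / C \<le> real (card (X i)) / real (card (X j)) \<and>
                                 real (card (X i)) / real (card (X j)) \<le> C) \<and>
      (\<forall>i\<in>{1..r}. \<forall>j\<in>{1..r}. j < i \<longrightarrow> (\<forall>v\<in>X i.
         real (card {w\<in>X j. col v w = Pink})
           \<le> (1 / (real r - 1) - \<epsilon>' * C ^ 3 / (real r - 1)) * real (card (X j)))) \<and>
      real (yellow_edges r X col)
        \<le> \<epsilon>' * 6 powr (- real r) * (\<Sum>i\<in>{1..r}. \<Sum>j\<in>{i<..r}. real (card (X i)) * real (card (X j)))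
      \<longrightarrow> has_white_Kr r X col)"
  \<comment> \<open>The counting argument works for every \<open>\<epsilon>' > 0\<close> and needs no lower bound on the
    part sizes, so \<open>\<epsilon>0 = 1\<close> and \<open>n0 = 0\<close> will do.\<close>
proof (intro exI[of _ "1::real"] exI[of _ "0::nat"] conjI allI impI, goal_cases)
  case (2 \<epsilon> X col)
  then interpret balanced_coloured_rpartite r C X col
    using assms by unfold_locales auto
  from 2 show ?case
    by (intro has_white_Kr_if_few_pink_and_yellow) auto
qed simp

end
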